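(* Let $\mathsf{CS}$ be a constant specification for $\mathsf{LPC}^+$. The canonical relational model $\mathcal M=(W,W_N,R_{Fm},R_{Tm},V)$ for $\mathsf{LPC}^+_{\mathsf{CS}}$ is an $\mathsf{LPC}^+_{\mathsf{CS}}$-model.
   Context: Language: countable sets $\mathsf{Const}$, $\mathsf{Var}$, $\mathsf{Prop}$; terms $t ::= c \mid x \mid t\cdot t \mid t+t \mid\ !t$; formulas $\phi ::= p \mid \neg\phi \mid \phi\wedge\phi \mid \phi\supset\phi \mid \phi>\phi \mid t{:}\phi$; $\mathsf{Tm},\mathsf{Fm}$ the sets of terms and formulas; $\bot:=\chi\wedge\neg\chi$ for a fixed $\chi$. Axiom schemes of $\mathsf{LPC}^+$: (A1) all instances of classical tautologies; (A2) $(\phi>(\psi\supset\chi))\supset((\phi>\psi)\supset(\phi>\chi))$; (A3) $\phi>\phi$; (A4) $(\phi>\psi)\supset(\phi\supset\psi)$; (A5) $(s{:}(\phi>\psi)\wedge t{:}\phi) > (s\cdot t){:}\psi$; (A6) $s{:}\phi > (s+t){:}\phi$; (A7) $t{:}\phi>(s+t){:}\phi$; (A8) $t{:}\phi>\phi$; (A9) $t{:}\phi > (!t){:}t{:}\phi$. A constant specification $\mathsf{CS}$ is a set of $c{:}\phi$ with $c\in\mathsf{Const}$, $\phi$ an instance of (A1)–(A9). $\mathsf{LPC}^+_{\mathsf{CS}}$: axioms (A1)–(A9) and $\mathsf{CS}$; rules (MP) and (RCN): from $\psi$ infer $\phi>\psi$. $T\vdash\phi$ iff $\vdash(\psi_1\wedge\cdots\wedge\psi_n)\supset\phi$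 for some $\psi_i\in T$; $T$ consistent iff $T\nvdash\bot$; maximal consistent sets as usual. Relational models $(W,W_N,R_{Fm},R_{Tm},V)$: $W_N\subseteq W$ nonempty; $R_\phi\subseteq W_N\times W_N$ for each formula; $R_t\subseteq W\times W$ for each term; $V(w)\subseteq\mathsf{Prop}$ for $w\in W_N$, $V(w)\subseteq\mathsf{Fm}$ for $w\in W\setminus W_N$. Truth: at non-normal $w$, $w\models\phi$ iff $\phi\in V(w)$; at normal $w$: $p$ iff $p\in V(w)$, $\neg,\wedge,\supset$ classical, $\phi>\psi$ iff $R_\phi(w)\subseteq[\psi]$, $t{:}\phi$ iff $R_t(w)\subseteq[\phi]$, with $[\phi]=\{w\in W: w\models\phi\}$. An $\mathsf{LPC}^+_{\mathsf{CS}}$-model is a relational model such that for all $w\in W_N$: (1) $R_\phi(w)\subseteq[\phi]$ for all $\phi$; (2) if $w\in[\phi]$ then $w\in R_\phi(w)$; (3) $R_c(w)\subseteq[\phi]$ for each $c{:}\phi\in\mathsf{CS}$; (4) $R_{s+t}(w)\subseteq R_s(w)\cap R_t(w)$; (5) for all $v\in R_{s\cdot t}(w)$ and all $\phi,\psi$: if $w\in[s{:}(\phi>\psi)\wedge t{:}\phi]$ then $v\in[\psi]$; (6) $wR_tw$ for all $t$; (7) for all $t$ and $v,u\in W$, if $wR_{!t}v$ and $vR_tu$ then $wR_tu$. The canonical relational model for $\mathsf{LPC}^+_{\mathsf{CS}}$: $W$ is the set of all subsets of $\mathsf{Fm}$; $W_N$ is the set of maximal $\mathsf{LPC}^+_{\mathsf{CS}}$-consistent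 sets; for $\Gamma,\Delta\in W_N$, $\Gamma R_\phi\Delta$ iff $\Gamma/\phi\subseteq\Delta$ where $\Gamma/\phi=\{\psi:\phi>\psi\in\Gamma\}$; for $\Gamma,\Delta\in W$, $\Gamma R_t\Delta$ iff $\Gamma/t\subseteq\Delta$ where $\Gamma/t=\{\psi: t{:}\psi\in\Gamma\}$; $V(\Gamma)=\Gamma$ for $\Gamma\in W\setminus W_N$ and $V(\Gamma)=\mathsf{Prop}\cap\Gamma$ for $\Gamma\in W_N$. *)

theory Defs
  imports Main "HOL-Library.Countable"
begin

datatype ('c, 'v) tm =
    TConst 'c
  | TVar 'v
  | TApp "('c, 'v) tm" "('c, 'v) tm"
  | TPlus "('c, 'v) tm" "('c, 'v) tm"
  | TBang "('c, 'v) tm"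

datatype ('c, 'v, 'p) fm =
    Atom 'p
  | Neg "('c, 'v, 'p) fm"
  | Conj "('c, 'v, 'p) fm" "('c, 'v, 'p) fm"
  | Imp "('c, 'v, 'p) fm" "('c, 'v, 'p) fm"
  | Cond "('c, 'v, 'p) fm" "('c, 'v, 'p) fm"
  | Just "('c, 'v) tm" "('c, 'v, 'p) fm"

definition fbot :: "('c, 'v, 'p) fm \<Rightarrow> ('c, 'v, 'p) fm" where
  "fbot chi = Conj chi (Neg chi)"

text \<open>Propositional evaluation: formulas whose main connective is not
  classical (atoms, conditionals, justification formulas) are treated as
  propositional atoms.\<close>
fun tv :: "(('c, 'v, 'p) fm \<Rightarrow> bool) \<Rightarrow> ('c, 'v, 'p) fm \<Rightarrow> bool" where
  "tv v (Neg a) = (\<not> tv v a)"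
| "tv v (Conj a b) = (tv v a \<and> tv v b)"
| "tv v (Imp a b) = (tv v a \<longrightarrow> tv v b)"
| "tv v a = v a"

definition taut :: "('c, 'v, 'p) fm \<Rightarrow> bool" where
  "taut a = (\<forall>v. tv v a)"

inductive axiom :: "('c, 'v, 'p) fm \<Rightarrow> bool" where
  A1: "taut a \<Longrightarrow> axiom a"
| A2: "axiom (Imp (Cond a (Imp b c)) (Imp (Cond a b) (Cond a c)))"
| A3: "axiom (Cond a a)"
| A4: "axiom (Imp (Cond a b) (Imp a b))"
| A5: "axiom (Cond (Conj (Just s (Cond a b)) (Just t a)) (Just (TApp s t) b))"
| A6: "axiom (Cond (Just s a) (Just (TPlus s t) a))"
| A7: "axiom (Cond (Just t a) (Just (TPlus s t) a))"
| A8: "axiom (Cond (Just t a) a)"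
| A9: "axiom (Cond (Just t a) (Just (TBang t) (Just t a)))"

definition const_spec :: "('c, 'v, 'p) fm set \<Rightarrow> bool" where
  "const_spec CS = (\<forall>x\<in>CS. \<exists>c a. x = Just (TConst c) a \<and> axiom a)"

inductive deriv :: "('c, 'v, 'p) fm set \<Rightarrow> ('c, 'v, 'p) fm \<Rightarrow> bool"
  for CS :: "('c, 'v, 'p) fm set" where
  Ax: "axiom a \<Longrightarrow> deriv CS a"
| CSAx: "a \<in> CS \<Longrightarrow> deriv CS a"
| MP: "deriv CS (Imp a b) \<Longrightarrow> deriv CS a \<Longrightarrow> deriv CS b"
| RCN: "deriv CS b \<Longrightarrow> deriv CS (Cond a b)"

fun conjs :: "('c, 'v, 'p) fm list \<Rightarrow> ('c, 'v, 'p) fm" where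
  "conjs [] = undefined"
| "conjs [a] = a"
| "conjs (a # as) = Conj a (conjs as)"

text \<open>T \<turnstile> \<phi>: \<turnstile> (\<psi>1 \<and> ... \<and> \<psi>n) \<supset> \<phi> for some \<psi>i \<in> T (n \<ge> 1), or \<turnstile> \<phi>
  (the case n = 0).\<close>
definition derives :: "('c, 'v, 'p) fm set \<Rightarrow> ('c, 'v, 'p) fm set \<Rightarrow> ('c, 'v, 'p) fm \<Rightarrow> bool" where
  "derives CS T a = (deriv CS a \<or>
     (\<exists>ps. ps \<noteq> [] \<and> set ps \<subseteq> T \<and> deriv CS (Imp (conjs ps) a)))"

definition consistent :: "('c, 'v, 'p) fm \<Rightarrow> ('c, 'v, 'p) fm set \<Rightarrow> ('c, 'v, 'p) fm set \<Rightarrow> bool" where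
  "consistent chi CS T = (\<not> derives CS T (fbot chi))"

definition max_consistent :: "('c, 'v, 'p) fm \<Rightarrow> ('c, 'v, 'p) fm set \<Rightarrow> ('c, 'v, 'p) fm set \<Rightarrow> bool" where
  "max_consistent chi CS T = (consistent chi CS T \<and>
     (\<forall>a. a \<notin> T \<longrightarrow> \<not> consistent chi CS (insert a T)))"

text \<open>The valuation V is split into Vp (used at normal worlds, values in Prop)
  and Vf (used at non-normal worlds, values in Fm).\<close>
record ('w, 'c, 'v, 'p) rmodel =
  mW :: "'w set"
  mWN :: "'w set"
  mRf :: "('c, 'v, 'p) fm \<Rightarrow> ('w \<times> 'w) set"
  mRt :: "('c, 'v) tm \<Rightarrow> ('w \<times> 'w) set"
  mVp :: "'w \<Rightarrow> 'p set"
  mVf :: "'w \<Rightarrow> ('c, 'v, 'p) fm set"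

fun sat :: "('w, 'c, 'v, 'p) rmodel \<Rightarrow> 'w \<Rightarrow> ('c, 'v, 'p) fm \<Rightarrow> bool" where
  "sat M w (Atom p) = (if w \<in> mWN M then p \<in> mVp M w else Atom p \<in> mVf M w)"
| "sat M w (Neg a) = (if w \<in> mWN M then \<not> sat M w a else Neg a \<in> mVf M w)"
| "sat M w (Conj a b) = (if w \<in> mWN M then sat M w a \<and> sat M w b else Conj a b \<in> mVf M w)"
| "sat M w (Imp a b) = (if w \<in> mWN M then sat M w a \<longrightarrow> sat M w b else Imp a b \<in> mVf M w)"
| "sat M w (Cond a b) = (if w \<in> mWN M then (\<forall>v. (w, v) \<in> mRf M a \<longrightarrow> v \<in> mW M \<and> sat M v b)
                          else Cond a b \<in> mVf M w)"
| "sat M w (Just t a) = (if w \<in> mWN M then (\<forall>v. (w, v) \<in> mRt M t \<longrightarrow> v \<in> mW M \<and> sat M v a)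
                          else Just t a \<in> mVf M w)"

definition ext :: "('w, 'c, 'v, 'p) rmodel \<Rightarrow> ('c, 'v, 'p) fm \<Rightarrow> 'w set" where
  "ext M a = {w \<in> mW M. sat M w a}"

definition relational_model :: "('w, 'c, 'v, 'p) rmodel \<Rightarrow> bool" where
  "relational_model M = (mWN M \<subseteq> mW M \<and> mWN M \<noteq> {} \<and>
     (\<forall>a. mRf M a \<subseteq> mWN M \<times> mWN M) \<and>
     (\<forall>t. mRt M t \<subseteq> mW M \<times> mW M))"

definition lpc_model :: "('c, 'v, 'p) fm set \<Rightarrow> ('w, 'c, 'v, 'p) rmodel \<Rightarrow> bool" where
  "lpc_model CS M = (relational_model M \<and>
    (\<forall>w \<in> mWN M.
      (\<forall>a. mRf M a `` {w} \<subseteq> ext M a) \<and>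
      (\<forall>a. w \<in> ext M a \<longrightarrow> (w, w) \<in> mRf M a) \<and>
      (\<forall>c a. Just (TConst c) a \<in> CS \<longrightarrow> mRt M (TConst c) `` {w} \<subseteq> ext M a) \<and>
      (\<forall>s t. mRt M (TPlus s t) `` {w} \<subseteq> mRt M s `` {w} \<inter> mRt M t `` {w}) \<and>
      (\<forall>s t. \<forall>v \<in> mRt M (TApp s t) `` {w}. \<forall>a b.
          w \<in> ext M (Conj (Just s (Cond a b)) (Just t a)) \<longrightarrow> v \<in> ext M b) \<and>
      (\<forall>t. (w, w) \<in> mRt M t) \<and>
      (\<forall>t v u. (w, v) \<in> mRt M (TBang t) \<and> (v, u) \<in> mRt M t \<longrightarrow> (w, u) \<in> mRt M t)))"

definition cslash_f :: "('c, 'v, 'p) fm set \<Rightarrow> ('c, 'v, 'p) fm \<Rightarrow> ('c, 'v, 'p) fm set" where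
  "cslash_f G a = {b. Cond a b \<in> G}"

definition cslash_t :: "('c, 'v, 'p) fm set \<Rightarrow> ('c, 'v) tm \<Rightarrow> ('c, 'v, 'p) fm set" where
  "cslash_t G t = {b. Just t b \<in> G}"

definition canonical_model :: "('c, 'v, 'p) fm \<Rightarrow> ('c, 'v, 'p) fm set
    \<Rightarrow> (('c, 'v, 'p) fm set, 'c, 'v, 'p) rmodel" where
  "canonical_model chi CS =
     \<lparr> mW = UNIV,
       mWN = {G. max_consistent chi CS G},
       mRf = (\<lambda>a. {(G, D). max_consistent chi CS G \<and> max_consistent chi CS D \<and> cslash_f G a \<subseteq> D}),
       mRt = (\<lambda>t. {(G, D). cslash_t G t \<subseteq> D}),
       mVp = (\<lambda>G. {p. Atom p \<in> G}),
       mVf = (\<lambda>G. G) \<rparr>"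

end

theory Submission
  imports Defs
begin

text \<open>Maximal consistent sets are closed under derivability and behave classically on
  the Boolean connectives.  Closing the set \<open>\<Gamma>/\<phi>\<close> under consequence uses A2 and RCN,
  and Lindenbaum's lemma provides, for \<open>\<phi> > \<psi> \<notin> \<Gamma>\<close>, a maximal consistent extension of
  \<open>\<Gamma>/\<phi> \<union> {\<not>\<psi>}\<close>; hence membership and truth coincide in the canonical model.  Every
  frame condition of an \<open>LPC\<^sup>+\<^sub>C\<^sub>S\<close>-model is then the membership of one axiom instance
  (A3, A4, the constant specification, A6/A7, A5, A8, A9) in each maximal consistent
  set, read through the conditional modus ponens given by A4.  Finally \<open>W\<^sub>N\<close> is
  nonempty because \<open>\<bottom>\<close> is underivable: reading \<open>>\<close> as material implication and \<open>t:\<phi>\<close>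
  as \<open>\<phi>\<close>, with every atom false, validates all theorems.\<close>

fun imps :: "('c, 'v, 'p) fm list \<Rightarrow> ('c, 'v, 'p) fm \<Rightarrow> ('c, 'v, 'p) fm" where
  "imps [] a = a"
| "imps (p # ps) a = Imp p (imps ps a)"

lemma tv_imps: "tv v (imps ps a) = ((\<forall>p\<in>set ps. tv v p) \<longrightarrow> tv v a)"
  by (induction ps) auto

lemma tv_conjs: "ps \<noteq> [] \<Longrightarrow> tv v (conjs ps) = (\<forall>p\<in>set ps. tv v p)"
  by (induction ps rule: conjs.induct) auto

lemma tv_fbot [simp]: "\<not> tv v (fbot chi)"
  by (simp add: fbot_def)

lemma deriv_tautological_consequence:
  assumes "\<forall>v. (\<forall>q\<in>set qs. tv v q) \<longrightarrow> tv v a" and "\<forall>q\<in>set qs. deriv CS q"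
  shows "deriv CS a"
proof -
  have "deriv CS (imps qs a)"
    by (rule deriv.Ax, rule axiom.A1) (use assms(1) in \<open>auto simp: taut_def tv_imps\<close>)
  then show ?thesis
    using assms(2) by (induction qs) (auto intro: deriv.MP)
qed

text \<open>Derivability from a set with the premises curried: unlike \<^const>\<open>derives\<close>, this
  needs no separate case for an empty list of premises.\<close>
definition derivable_from :: "('c, 'v, 'p) fm set \<Rightarrow> ('c, 'v, 'p) fm set \<Rightarrow> ('c, 'v, 'p) fm \<Rightarrow> bool" where
  "derivable_from CS T a = (\<exists>ps. set ps \<subseteq> T \<and> deriv CS (imps ps a))"

lemma derives_iff_derivable_from: "derives CS T a = derivable_from CS T a"
proof
  assume "derives CS T a"
  then consider "deriv CS a" | ps where "ps \<noteq> []" "set ps \<subseteq> T" "deriv CS (Imp (conjs ps) a)"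
    unfolding derives_def by blast
  then show "derivable_from CS T a"
  proof cases
    case 1
    then show ?thesis unfolding derivable_from_def by (intro exI[of _ "[]"]) simp
  next
    case 2
    have "deriv CS (imps ps a)"
      by (rule deriv_tautological_consequence[of "[Imp (conjs ps) a]"])
        (use 2 in \<open>auto simp: tv_imps tv_conjs\<close>)
    with 2 show ?thesis unfolding derivable_from_def by blast
  qed
next
  assume "derivable_from CS T a"
  then obtain ps where ps: "set ps \<subseteq> T" "deriv CS (imps ps a)"
    unfolding derivable_from_def by blast
  show "derives CS T a"
  proof (cases "ps = []")
    case True
    with ps show ?thesis unfolding derives_def by simp
  next
    case False
    have "deriv CS (Imp (conjs ps) a)"
      by (rule deriv_tautological_consequence[of "[imps ps a]"])
        (use ps False in \<open>auto simp: tv_imps tv_conjs\<close>)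
    with ps False show ?thesis unfolding derives_def by blast
  qed
qed

lemma derivable_from_tautological_consequence:
  assumes "\<forall>v. (\<forall>q\<in>set qs. tv v q) \<longrightarrow> tv v a" and "\<forall>q\<in>set qs. derivable_from CS T q"
  shows "derivable_from CS T a"
proof -
  obtain f where f: "\<forall>q\<in>set qs. set (f q) \<subseteq> T \<and> deriv CS (imps (f q) q)"
    using bchoice[OF assms(2)[unfolded derivable_from_def]] by blast
  let ?ps = "concat (map f qs)"
  have "deriv CS (imps ?ps a)"
    by (rule deriv_tautological_consequence[of "map (\<lambda>q. imps (f q) q) qs"])
      (use assms(1) f in \<open>auto simp: tv_imps\<close>)
  moreover have "set ?ps \<subseteq> T"
    using f by auto
  ultimately show ?thesis
    unfolding derivable_from_def by blast
qed

lemma derivable_from_mem: "a \<in> T \<Longrightarrow> derivable_from CS T a"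
  unfolding derivable_from_def
  by (intro exI[of _ "[a]"]) (auto intro!: deriv.Ax axiom.A1 simp: taut_def)

lemma derivable_from_deriv: "deriv CS a \<Longrightarrow> derivable_from CS T a"
  unfolding derivable_from_def by (intro exI[of _ "[]"]) simp

lemma derivable_from_deduction:
  assumes "derivable_from CS (insert b T) a"
  shows "derivable_from CS T (Imp b a)"
proof -
  obtain ps where ps: "set ps \<subseteq> insert b T" "deriv CS (imps ps a)"
    using assms unfolding derivable_from_def by blast
  let ?qs = "filter (\<lambda>x. x \<noteq> b) ps"
  have "deriv CS (imps ?qs (Imp b a))"
    by (rule deriv_tautological_consequence[of "[imps ps a]"]) (use ps in \<open>auto simp: tv_imps\<close>)
  moreover have "set ?qs \<subseteq> T"
    using ps by auto
  ultimately show ?thesis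
    unfolding derivable_from_def by blast
qed

lemma derivable_from_by_contradiction:
  assumes "derivable_from CS (insert (Neg a) T) (fbot chi)"
  shows "derivable_from CS T a"
  using derivable_from_deduction[OF assms]
  by (intro derivable_from_tautological_consequence[of "[Imp (Neg a) (fbot chi)]"]) auto

lemma max_consistent_not_derivable_bot:
  "max_consistent chi CS G \<Longrightarrow> \<not> derivable_from CS G (fbot chi)"
  unfolding max_consistent_def consistent_def derives_iff_derivable_from by blast

lemma max_consistent_derivable_from_mem:
  assumes G: "max_consistent chi CS G" and "derivable_from CS G a"
  shows "a \<in> G"
proof (rule ccontr)
  assume "a \<notin> G"
  with G have "derivable_from CS (insert a G) (fbot chi)"
    unfolding max_consistent_def consistent_def derives_iff_derivable_from by blast
  then have "derivable_from CS G (Imp a (fbot chi))"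
    by (rule derivable_from_deduction)
  then have "derivable_from CS G (fbot chi)"
    by (intro derivable_from_tautological_consequence[of "[a, Imp a (fbot chi)]"])
      (use assms(2) in auto)
  with G show False
    using max_consistent_not_derivable_bot by blast
qed

lemma max_consistent_tautological_consequence:
  assumes G: "max_consistent chi CS G" and "\<forall>v. (\<forall>q\<in>set qs. tv v q) \<longrightarrow> tv v a"
    and "set qs \<subseteq> G"
  shows "a \<in> G"
proof -
  have "\<forall>q\<in>set qs. derivable_from CS G q"
    using assms(3) derivable_from_mem by blast
  with assms(2) have "derivable_from CS G a"
    by (rule derivable_from_tautological_consequence)
  with G show ?thesis
    by (rule max_consistent_derivable_from_mem)
qed

lemma max_consistent_deriv: "max_consistent chi CS G \<Longrightarrow> deriv CS a \<Longrightarrow> a \<in> G"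
  by (erule max_consistent_derivable_from_mem, erule derivable_from_deriv)

lemma max_consistent_axiom: "max_consistent chi CS G \<Longrightarrow> axiom a \<Longrightarrow> a \<in> G"
  by (erule max_consistent_deriv, erule deriv.Ax)

lemma max_consistent_MP:
  "max_consistent chi CS G \<Longrightarrow> Imp a b \<in> G \<Longrightarrow> a \<in> G \<Longrightarrow> b \<in> G"
  using max_consistent_tautological_consequence[of chi CS G "[Imp a b, a]" b] by auto

lemma max_consistent_Neg:
  assumes G: "max_consistent chi CS G"
  shows "Neg a \<in> G \<longleftrightarrow> a \<notin> G"
proof
  assume "Neg a \<in> G"
  show "a \<notin> G"
  proof
    assume "a \<in> G"
    with \<open>Neg a \<in> G\<close> have "fbot chi \<in> G"
      using max_consistent_tautological_consequence[OF G, of "[a, Neg a]" "fbot chi"] by auto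
    with G show False
      using max_consistent_not_derivable_bot derivable_from_mem by blast
  qed
next
  assume "a \<notin> G"
  with G have "derivable_from CS (insert a G) (fbot chi)"
    unfolding max_consistent_def consistent_def derives_iff_derivable_from by blast
  then have "derivable_from CS G (Imp a (fbot chi))"
    by (rule derivable_from_deduction)
  then have "derivable_from CS G (Neg a)"
    by (intro derivable_from_tautological_consequence[of "[Imp a (fbot chi)]"]) auto
  with G show "Neg a \<in> G"
    by (rule max_consistent_derivable_from_mem)
qed

lemma max_consistent_Conj:
  assumes G: "max_consistent chi CS G"
  shows "Conj a b \<in> G \<longleftrightarrow> a \<in> G \<and> b \<in> G"
proof
  assume ab: "Conj a b \<in> G"
  show "a \<in> G \<and> b \<in> G"
  proof
    show "a \<in> G"
      by (rule max_consistent_tautological_consequence[OF G, of "[Conj a b]"]) (use ab in auto)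
    show "b \<in> G"
      by (rule max_consistent_tautological_consequence[OF G, of "[Conj a b]"]) (use ab in auto)
  qed
next
  assume "a \<in> G \<and> b \<in> G"
  then show "Conj a b \<in> G"
    by (intro max_consistent_tautological_consequence[OF G, of "[a, b]"]) auto
qed

lemma max_consistent_Imp:
  assumes G: "max_consistent chi CS G"
  shows "Imp a b \<in> G \<longleftrightarrow> (a \<in> G \<longrightarrow> b \<in> G)"
proof
  assume "a \<in> G \<longrightarrow> b \<in> G"
  then consider "b \<in> G" | "Neg a \<in> G"
    using max_consistent_Neg[OF G] by blast
  then show "Imp a b \<in> G"
  proof cases
    case 1
    then show ?thesis
      by (intro max_consistent_tautological_consequence[OF G, of "[b]"]) auto
  next
    case 2
    then show ?thesis
      by (intro max_consistent_tautological_consequence[OF G, of "[Neg a]"]) auto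
  qed
qed (use max_consistent_MP[OF G] in blast)

fun flat_val :: "('c, 'v, 'p) fm \<Rightarrow> bool" where
  "flat_val (Atom p) = False"
| "flat_val (Neg a) = (\<not> flat_val a)"
| "flat_val (Conj a b) = (flat_val a \<and> flat_val b)"
| "flat_val (Imp a b) = (flat_val a \<longrightarrow> flat_val b)"
| "flat_val (Cond a b) = (flat_val a \<longrightarrow> flat_val b)"
| "flat_val (Just t a) = flat_val a"

lemma tv_flat_val: "tv flat_val a = flat_val a"
  by (induction a) auto

lemma axiom_flat_val: "axiom a \<Longrightarrow> flat_val a"
proof (induction rule: axiom.induct)
  case (A1 a)
  then show ?case using tv_flat_val[of a] unfolding taut_def by blast
qed auto

lemma deriv_flat_val:
  assumes "const_spec CS"
  shows "deriv CS a \<Longrightarrow> flat_val a"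
proof (induction rule: deriv.induct)
  case (CSAx a)
  with assms show ?case
    using axiom_flat_val unfolding const_spec_def by fastforce
qed (auto intro: axiom_flat_val)

lemma empty_not_derivable_bot:
  assumes "const_spec CS"
  shows "\<not> derivable_from CS {} (fbot chi)"
  using deriv_flat_val[OF assms, of "fbot chi"] unfolding derivable_from_def
  by (auto simp: fbot_def)

lemma derivable_from_Union_chain:
  assumes "C \<noteq> {}" and "subset.chain A C" and "derivable_from CS (\<Union>C) a"
  shows "\<exists>X\<in>C. derivable_from CS X a"
proof -
  obtain ps where ps: "set ps \<subseteq> \<Union>C" "deriv CS (imps ps a)"
    using assms(3) unfolding derivable_from_def by blast
  have "\<exists>X\<in>C. F \<subseteq> X" if "finite F" "F \<subseteq> \<Union>C" for F
    using that
  proof (induction F rule: finite_induct)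
    case empty
    then show ?case using assms(1) by blast
  next
    case (insert x F)
    then obtain X Y where "X \<in> C" "F \<subseteq> X" "Y \<in> C" "x \<in> Y"
      by auto
    with assms(2) show ?case
      unfolding subset_chain_def by (metis insert_subset subset_trans)
  qed
  with ps show ?thesis
    unfolding derivable_from_def by blast
qed

lemma lindenbaum:
  assumes "\<not> derivable_from CS S (fbot chi)"
  obtains G where "S \<subseteq> G" and "max_consistent chi CS G"
proof -
  let ?A = "{T. S \<subseteq> T \<and> \<not> derivable_from CS T (fbot chi)}"
  have "\<exists>M\<in>?A. \<forall>X\<in>?A. M \<subseteq> X \<longrightarrow> X = M"
  proof (rule subset_Zorn_nonempty)
    fix C assume C: "C \<noteq> {}" "subset.chain ?A C"
    then have "S \<subseteq> \<Union>C" and "\<forall>X\<in>C. \<not> derivable_from CS X (fbot chi)"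
      unfolding subset_chain_def by blast+
    with derivable_from_Union_chain[OF C] show "\<Union>C \<in> ?A"
      by blast
  qed (use assms in blast)
  then obtain M where M: "S \<subseteq> M" "\<not> derivable_from CS M (fbot chi)"
    and maximal: "\<forall>X\<in>?A. M \<subseteq> X \<longrightarrow> X = M"
    by blast
  have "max_consistent chi CS M"
    unfolding max_consistent_def consistent_def derives_iff_derivable_from
    using M maximal by blast
  with M(1) show ?thesis
    by (rule that)
qed

lemma canonical_model_simps [simp]:
  "mW (canonical_model chi CS) = UNIV"
  "mWN (canonical_model chi CS) = {G. max_consistent chi CS G}"
  "mRf (canonical_model chi CS) a =
     {(G, D). max_consistent chi CS G \<and> max_consistent chi CS D \<and> cslash_f G a \<subseteq> D}"
  "mRt (canonical_model chi CS) t = {(G, D). cslash_t G t \<subseteq> D}"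
  "mVp (canonical_model chi CS) = (\<lambda>G. {p. Atom p \<in> G})"
  "mVf (canonical_model chi CS) = (\<lambda>G. G)"
  by (simp_all add: canonical_model_def)

lemma max_consistent_Cond_closed:
  assumes G: "max_consistent chi CS G"
    and "deriv CS (imps ps b)" and "set ps \<subseteq> cslash_f G a"
  shows "Cond a b \<in> G"
  using assms(2,3)
proof (induction ps arbitrary: b)
  case Nil
  then show ?case using max_consistent_deriv[OF G] deriv.RCN by auto
next
  case (Cons p ps)
  have "deriv CS (imps ps (Imp p b))"
    by (rule deriv_tautological_consequence[of "[imps (p # ps) b]"])
      (use Cons.prems in \<open>auto simp: tv_imps\<close>)
  with Cons have "Cond a (Imp p b) \<in> G"
    by auto
  moreover have "Cond a p \<in> G"
    using Cons.prems by (simp add: cslash_f_def)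
  ultimately show ?case
    using max_consistent_axiom[OF G axiom.A2[of a p b]] max_consistent_MP[OF G] by blast
qed

lemma max_consistent_Cond_witness:
  assumes G: "max_consistent chi CS G" and "Cond a b \<notin> G"
  obtains D where "max_consistent chi CS D" and "cslash_f G a \<subseteq> D" and "b \<notin> D"
proof -
  have "\<not> derivable_from CS (insert (Neg b) (cslash_f G a)) (fbot chi)"
  proof
    assume "derivable_from CS (insert (Neg b) (cslash_f G a)) (fbot chi)"
    then have "derivable_from CS (cslash_f G a) b"
      by (rule derivable_from_by_contradiction)
    then obtain ps where "deriv CS (imps ps b)" "set ps \<subseteq> cslash_f G a"
      unfolding derivable_from_def by blast
    with assms(2) show False
      using max_consistent_Cond_closed[OF G] by blast
  qed
  then obtain D where D: "insert (Neg b) (cslash_f G a) \<subseteq> D" "max_consistent chi CS D"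
    by (rule lindenbaum)
  then have "b \<notin> D"
    using max_consistent_Neg[OF D(2)] by blast
  with D show ?thesis
    using that by blast
qed

lemma sat_canonical_model_iff_mem: "sat (canonical_model chi CS) D a \<longleftrightarrow> a \<in> D"
proof (induction a arbitrary: D)
  case (Neg a)
  then show ?case by (simp add: max_consistent_Neg)
next
  case (Conj a b)
  then show ?case by (simp add: max_consistent_Conj)
next
  case (Imp a b)
  then show ?case by (simp add: max_consistent_Imp)
next
  case (Cond a b)
  show ?case
  proof (cases "max_consistent chi CS D")
    case True
    have "(\<forall>E. max_consistent chi CS E \<and> cslash_f D a \<subseteq> E \<longrightarrow> b \<in> E) \<longleftrightarrow> Cond a b \<in> D"
    proof
      assume closed: "\<forall>E. max_consistent chi CS E \<and> cslash_f D a \<subseteq> E \<longrightarrow> b \<in> E"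
      show "Cond a b \<in> D"
      proof (rule ccontr)
        assume "Cond a b \<notin> D"
        with True obtain E where "max_consistent chi CS E" "cslash_f D a \<subseteq> E" "b \<notin> E"
          by (rule max_consistent_Cond_witness)
        with closed show False
          by blast
      qed
    qed (auto simp: cslash_f_def)
    with True Cond.IH(2) show ?thesis
      by simp
  qed simp
next
  case (Just t a)
  then show ?case
    by (auto simp: cslash_t_def)
qed simp

lemma ext_canonical_model: "ext (canonical_model chi CS) a = {D. a \<in> D}"
  unfolding ext_def by (simp add: sat_canonical_model_iff_mem)

lemma max_consistent_Cond_MP:
  "max_consistent chi CS G \<Longrightarrow> Cond a b \<in> G \<Longrightarrow> a \<in> G \<Longrightarrow> b \<in> G"
  using max_consistent_axiom[of chi CS G "Imp (Cond a b) (Imp a b)"] axiom.A4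
    max_consistent_MP
  by blast

lemma max_consistent_axiom_Cond_MP:
  "max_consistent chi CS G \<Longrightarrow> axiom (Cond a b) \<Longrightarrow> a \<in> G \<Longrightarrow> b \<in> G"
  by (blast intro: max_consistent_Cond_MP max_consistent_axiom)

theorem mainTheorem9:
  fixes CS :: "('c::countable, 'v::countable, 'p::countable) fm set"
    and chi :: "('c, 'v, 'p) fm"
  assumes "const_spec CS"
  shows "lpc_model CS (canonical_model chi CS)"
proof -
  let ?M = "canonical_model chi CS"
  obtain G0 where "max_consistent chi CS G0"
    using lindenbaum[OF empty_not_derivable_bot[OF assms]] .
  then have "relational_model ?M"
    unfolding relational_model_def by auto
  then show ?thesis
    unfolding lpc_model_def
  proof (intro conjI ballI allI impI)
    fix G assume "G \<in> mWN ?M"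
    then have G: "max_consistent chi CS G" by simp
    note axiom_MP = max_consistent_axiom_Cond_MP[OF G]
    show "mRf ?M a `` {G} \<subseteq> ext ?M a" for a
      using max_consistent_axiom[OF G axiom.A3[of a]]
      by (auto simp: ext_canonical_model cslash_f_def)
    show "(G, G) \<in> mRf ?M a" if "G \<in> ext ?M a" for a
      using that G max_consistent_Cond_MP[OF G, of a]
      by (auto simp: ext_canonical_model cslash_f_def)
    show "mRt ?M (TConst c) `` {G} \<subseteq> ext ?M a" if "Just (TConst c) a \<in> CS" for c a
      using max_consistent_deriv[OF G deriv.CSAx[OF that]]
      by (auto simp: ext_canonical_model cslash_t_def)
    show "mRt ?M (TPlus s t) `` {G} \<subseteq> mRt ?M s `` {G} \<inter> mRt ?M t `` {G}" for s t
      using axiom_MP[OF axiom.A6] axiom_MP[OF axiom.A7] by (auto simp: cslash_t_def)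
    show "v \<in> ext ?M b" if "v \<in> mRt ?M (TApp s t) `` {G}"
      and "G \<in> ext ?M (Conj (Just s (Cond a b)) (Just t a))" for s t v a b
      using that axiom_MP[OF axiom.A5] by (auto simp: ext_canonical_model cslash_t_def)
    show "(G, G) \<in> mRt ?M t" for t
      using axiom_MP[OF axiom.A8] by (auto simp: cslash_t_def)
    show "(G, u) \<in> mRt ?M t" if "(G, v) \<in> mRt ?M (TBang t) \<and> (v, u) \<in> mRt ?M t" for t v u
      using that axiom_MP[OF axiom.A9] by (auto simp: cslash_t_def)
  qed
qed

end
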